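(* Let $V^{\bullet\bullet}$ be an $N=2$ supersymmetric complex whose bigrading satisfies $V^{ij}=0$ for $i\ll0$ or $j\ll0$. Then the total complex $\mathrm{Tot}(V^{\bullet\bullet})$ (with differential $D_1+D_2$) is quasi-isomorphic to the $0$th row $(V^{\bullet,0},D_1)$ and to the $0$th column $(V^{0,\bullet},D_2)$.
   Context: Let $G=\underline{\mathrm{Aut}}(\mathbb A^{0|2})$ be the group super-scheme of automorphisms of $\mathrm{Spec}\,\Lambda[\eta_1,\eta_2]$ ($\eta_i$ odd), isomorphic to $SL_{1|2}$, with Lie superalgebra $\mathrm{Der}\,\Lambda[\eta_1,\eta_2]$. An $N=2$ supersymmetric complex is a super vector space $V$ with a $G$-action. The torus $\mathbb G_m\times\mathbb G_m$ (substitutions $\eta_i\mapsto b_i\eta_i$) gives a bigrading $V=\bigoplus V^{ij}$ with $\eta_1\partial/\partial\eta_1$ acting by $i$ and $\eta_2\partial/\partial\eta_2$ by $j$; $D_1=\partial/\partial\eta_1$ and $D_2=\partial/\partial\eta_2$ act as anticommuting square-zero differentials of bidegrees $(1,0)$ and $(0,1)$, making $V^{\bullet\bullet}$ a double complex. *)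

theory Defs
  imports Complex_Main
begin

text \<open>An element of the Grassmann algebra k[eta1,eta2] (eta_i odd) is given by its
coefficients: f (a,b) is the coefficient of the monomial eta1^a eta2^b
(a, b in bool, True = exponent 1).\<close>

type_synonym 'k grass = "bool \<times> bool \<Rightarrow> 'k"

definition gadd :: "'k::field grass \<Rightarrow> 'k grass \<Rightarrow> 'k grass" where
  "gadd f g = (\<lambda>m. f m + g m)"

definition gscale :: "'k::field \<Rightarrow> 'k grass \<Rightarrow> 'k grass" where
  "gscale c f = (\<lambda>m. c * f m)"

text \<open>Product, using eta2 * eta1 = - eta1 * eta2 and eta_i^2 = 0.\<close>
definition gmul :: "'k::field grass \<Rightarrow> 'k grass \<Rightarrow> 'k grass" where
  "gmul f g = (\<lambda>(c1, c2).
     if \<not> c1 \<and> \<not> c2 then f (False, False) * g (False, False)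
     else if c1 \<and> \<not> c2 then f (True, False) * g (False, False) + f (False, False) * g (True, False)
     else if \<not> c1 \<and> c2 then f (False, True) * g (False, False) + f (False, False) * g (False, True)
     else f (True, True) * g (False, False) + f (False, False) * g (True, True)
          + f (True, False) * g (False, True) - f (False, True) * g (True, False))"

definition eta1 :: "'k::field grass" where
  "eta1 = (\<lambda>m. if m = (True, False) then 1 else 0)"
definition eta2 :: "'k::field grass" where
  "eta2 = (\<lambda>m. if m = (False, True) then 1 else 0)"

definition mon_parity :: "bool \<times> bool \<Rightarrow> bool" where
  "mon_parity m = (fst m \<noteq> snd m)"

definition ghomog :: "bool \<Rightarrow> 'k::field grass \<Rightarrow> bool" where
  "ghomog p f \<longleftrightarrow> (\<forall>m. f m \<noteq> 0 \<longrightarrow> mon_parity m = p)"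

definition ssign :: "bool \<Rightarrow> bool \<Rightarrow> 'k::field" where
  "ssign p q = (if p \<and> q then -1 else 1)"

text \<open>Superderivations of parity p (False = even, True = odd).\<close>
definition sder :: "bool \<Rightarrow> ('k::field grass \<Rightarrow> 'k grass) \<Rightarrow> bool" where
  "sder p D \<longleftrightarrow>
     (\<forall>f g. D (gadd f g) = gadd (D f) (D g)) \<and>
     (\<forall>c f. D (gscale c f) = gscale c (D f)) \<and>
     (\<forall>q f. ghomog q f \<longrightarrow> ghomog (q \<noteq> p) (D f)) \<and>
     (\<forall>q f g. ghomog q f \<longrightarrow>
        D (gmul f g) = gadd (gmul (D f) g) (gscale (ssign p q) (gmul f (D g))))"

definition Der :: "('k::field grass \<Rightarrow> 'k grass) set" where
  "Der = {D. \<exists>D0 D1. sder False D0 \<and> sder True D1 \<and> D = (\<lambda>h. gadd (D0 h) (D1 h))}"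

text \<open>Partial derivatives d/d eta1, d/d eta2 (left derivatives).\<close>
definition del1 :: "'k::field grass \<Rightarrow> 'k grass" where
  "del1 h = (\<lambda>(a, b). if a then 0 else h (True, b))"
definition del2 :: "'k::field grass \<Rightarrow> 'k grass" where
  "del2 h = (\<lambda>(a, b). if b then 0 else (if a then -1 else 1) * h (a, True))"

definition E11 :: "'k::field grass \<Rightarrow> 'k grass" where
  "E11 h = gmul eta1 (del1 h)"
definition E22 :: "'k::field grass \<Rightarrow> 'k grass" where
  "E22 h = gmul eta2 (del2 h)"

definition lin_on :: "('k::field \<Rightarrow> 'v::ab_group_add \<Rightarrow> 'v) \<Rightarrow> 'v set \<Rightarrow> ('v \<Rightarrow> 'v) \<Rightarrow> bool" where
  "lin_on s U f \<longleftrightarrow> (\<forall>x\<in>U. \<forall>y\<in>U. f (x + y) = f x + f y) \<and> (\<forall>c. \<forall>x\<in>U. f (s c x) = s c (f x))"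

text \<open>A super vector space V (ambient type 'v, scalar multiplication s) with parity
decomposition V = Vpar False (+) Vpar True, a bigrading V = (+)_{ij} Vg i j compatible with
parity, and an action rho of the group superscheme G = Aut(A^{0|2}) presented as a
Harish-Chandra pair (char 0): an (infinitesimal) action of Der k[eta1,eta2] whose even part
gl_2 acts locally finitely and whose Euler fields eta_i d/d eta_i act on V^{ij} by i and j.
With the grading convention of the paper (D1 = rho(d/d eta1) of bidegree (1,0)) the
infinitesimal action reverses brackets: rho [X,Y] = - [rho X, rho Y].\<close>

definition N2_susy_complex ::
  "('k::field_char_0 \<Rightarrow> 'v::ab_group_add \<Rightarrow> 'v) \<Rightarrow> (bool \<Rightarrow> 'v set) \<Rightarrow> (int \<Rightarrow> int \<Rightarrow> 'v set)
   \<Rightarrow> (('k grass \<Rightarrow> 'k grass) \<Rightarrow> 'v \<Rightarrow> 'v) \<Rightarrow> bool" where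
  "N2_susy_complex s Vpar Vg \<rho> \<longleftrightarrow>
     vector_space s \<and>
     \<comment> \<open>super vector space structure\<close>
     (\<forall>p. module.subspace s (Vpar p)) \<and>
     (\<forall>v. \<exists>!(a, b). a \<in> Vpar False \<and> b \<in> Vpar True \<and> v = a + b) \<and>
     \<comment> \<open>bigrading: V is the direct sum of the Vg i j\<close>
     (\<forall>i j. module.subspace s (Vg i j)) \<and>
     (\<forall>v. \<exists>!c :: int \<times> int \<Rightarrow> 'v. finite {ij. c ij \<noteq> 0} \<and> (\<forall>i j. c (i, j) \<in> Vg i j)
            \<and> v = sum c {ij. c ij \<noteq> 0}) \<and>
     (\<forall>i j v. v \<in> Vg i j \<longrightarrow>
        (\<exists>a b. a \<in> Vg i j \<inter> Vpar False \<and> b \<in> Vg i j \<inter> Vpar True \<and> v = a + b)) \<and>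
     \<comment> \<open>rho is linear on Der\<close>
     (\<forall>D\<in>Der. \<forall>E\<in>Der. \<rho> (\<lambda>h. gadd (D h) (E h)) = (\<lambda>v. \<rho> D v + \<rho> E v)) \<and>
     (\<forall>D\<in>Der. \<forall>c. \<rho> (\<lambda>h. gscale c (D h)) = (\<lambda>v. s c (\<rho> D v))) \<and>
     \<comment> \<open>homogeneous elements act by linear operators of the same parity\<close>
     (\<forall>p D. sder p D \<longrightarrow> lin_on s UNIV (\<rho> D) \<and>
        (\<forall>q v. v \<in> Vpar q \<longrightarrow> \<rho> D v \<in> Vpar (q \<noteq> p))) \<and>
     \<comment> \<open>compatibility with the super bracket\<close>
     (\<forall>p q D E. sder p D \<longrightarrow> sder q E \<longrightarrow>
        \<rho> (\<lambda>h. gadd (D (E h)) (gscale (- ssign p q) (E (D h))))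
          = (\<lambda>v. - (\<rho> D (\<rho> E v) - s (ssign p q) (\<rho> E (\<rho> D v))))) \<and>
     \<comment> \<open>the torus G_m x G_m gives the bigrading\<close>
     (\<forall>i j v. v \<in> Vg i j \<longrightarrow> \<rho> E11 v = s (of_int i) v \<and> \<rho> E22 v = s (of_int j) v) \<and>
     \<comment> \<open>integrability of the even part gl_2: local finiteness\<close>
     (\<forall>v. \<exists>B. finite B \<and> v \<in> module.span s B \<and>
        (\<forall>D. sder False D \<longrightarrow> (\<forall>w\<in>module.span s B. \<rho> D w \<in> module.span s B)))"

definition cochain_complex :: "('k::field \<Rightarrow> 'v::ab_group_add \<Rightarrow> 'v) \<Rightarrow> (int \<Rightarrow> 'v set) \<Rightarrow> ('v \<Rightarrow> 'v) \<Rightarrow> bool" where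
  "cochain_complex s C d \<longleftrightarrow>
     (\<forall>n. module.subspace s (C n) \<and> lin_on s (C n) d \<and> d ` C n \<subseteq> C (n + 1) \<and>
          (\<forall>x\<in>C n. d (d x) = 0))"

definition quasi_iso :: "('k::field \<Rightarrow> 'v::ab_group_add \<Rightarrow> 'v) \<Rightarrow> (int \<Rightarrow> 'v set) \<Rightarrow> ('v \<Rightarrow> 'v)
    \<Rightarrow> (int \<Rightarrow> 'v set) \<Rightarrow> ('v \<Rightarrow> 'v) \<Rightarrow> ('v \<Rightarrow> 'v) \<Rightarrow> bool" where
  "quasi_iso s C d C' d' f \<longleftrightarrow>
     cochain_complex s C d \<and> cochain_complex s C' d' \<and>
     (\<forall>n. lin_on s (C n) f \<and> f ` C n \<subseteq> C' n \<and> (\<forall>x\<in>C n. f (d x) = d' (f x))) \<and>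
     \<comment> \<open>injective on cohomology\<close>
     (\<forall>n z. z \<in> C n \<and> d z = 0 \<and> (\<exists>y\<in>C' (n - 1). f z = d' y) \<longrightarrow> (\<exists>y\<in>C (n - 1). z = d y)) \<and>
     \<comment> \<open>surjective on cohomology\<close>
     (\<forall>n w. w \<in> C' n \<and> d' w = 0 \<longrightarrow>
        (\<exists>z\<in>C n. d z = 0 \<and> (\<exists>y\<in>C' (n - 1). w = f z + d' y)))"

text \<open>Quasi-isomorphic: related by the equivalence relation generated by quasi-isomorphisms
(zig-zags of quasi-isomorphisms), among complexes of subspaces of the ambient space.\<close>
definition quasi_isomorphic :: "('k::field \<Rightarrow> 'v::ab_group_add \<Rightarrow> 'v) \<Rightarrow> (int \<Rightarrow> 'v set) \<Rightarrow> ('v \<Rightarrow> 'v)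
    \<Rightarrow> (int \<Rightarrow> 'v set) \<Rightarrow> ('v \<Rightarrow> 'v) \<Rightarrow> bool" where
  "quasi_isomorphic s C d C' d' \<longleftrightarrow>
     equivclp (\<lambda>(A, dA) (B, dB). \<exists>f. quasi_iso s A dA B dB f) (C, d) (C', d')"

definition Tot :: "('k::field \<Rightarrow> 'v::ab_group_add \<Rightarrow> 'v) \<Rightarrow> (int \<Rightarrow> int \<Rightarrow> 'v set) \<Rightarrow> int \<Rightarrow> 'v set" where
  "Tot s Vg n = module.span s (\<Union>{Vg i j | i j. i + j = n})"

definition row0 :: "(int \<Rightarrow> int \<Rightarrow> 'v set) \<Rightarrow> int \<Rightarrow> 'v set" where
  "row0 Vg n = Vg n 0"

definition col0 :: "(int \<Rightarrow> int \<Rightarrow> 'v set) \<Rightarrow> int \<Rightarrow> 'v set" where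
  "col0 Vg n = Vg 0 n"

end

theory Submission
  imports Defs
begin

text \<open>Write \<open>P = \<rho>(\<partial>\<^sub>1)\<close>, \<open>Q = \<rho>(\<partial>\<^sub>2)\<close> and \<open>A = \<rho>(\<eta>\<^sub>2\<partial>\<^sub>1)\<close>. The relations of
  \<open>Der \<Lambda>[\<eta>\<^sub>1,\<eta>\<^sub>2]\<close> give \<open>[A, Q] = P\<close> and \<open>[A, P] = 0\<close>, hence \<open>(P + Q) e\<^sup>A = e\<^sup>A Q\<close>:
  the exponential of the locally nilpotent operator \<open>A\<close> is a chain map from the column
  \<open>(V\<^sup>0\<^sup>\<bullet>, Q)\<close> to the total complex. Moreover \<open>[Q, \<rho>(\<eta>\<^sub>1\<eta>\<^sub>2\<partial>\<^sub>1)] = \<rho>(E11)\<close> acts on the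
  column \<open>i\<close> by \<open>i\<close>, so all columns \<open>i \<noteq> 0\<close> are \<open>Q\<close>-contractible. Sweeping a total
  cocycle column by column to the right (the bigrading is bounded below, so this terminates)
  shows that \<open>e\<^sup>A\<close> is a quasi-isomorphism. The row is treated by the same argument after
  transposing the bigrading, with the roles of \<open>\<eta>\<^sub>1\<close> and \<open>\<eta>\<^sub>2\<close> exchanged.\<close>

section \<open>Vector fields on \<open>\<AA>\<^sup>0\<^sup>|\<^sup>2\<close>\<close>

lemma grass_eq_iff:
  "(f::'a grass) = g \<longleftrightarrow> f (False,False) = g (False,False) \<and> f (True,False) = g (True,False)
     \<and> f (False,True) = g (False,True) \<and> f (True,True) = g (True,True)"
  by (metis (full_types) ext surj_pair)

lemma ghomog_iff:
  "ghomog q f \<longleftrightarrow> (if q then f (False,False) = 0 \<and> f (True,True) = 0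
                              else f (True,False) = 0 \<and> f (False,True) = 0)"
  unfolding ghomog_def mon_parity_def by (cases q) (auto, (metis (full_types) prod.collapse)+)

definition E21 :: "'k::field grass \<Rightarrow> 'k grass" where
  "E21 h = gmul eta2 (del1 h)"

definition E12 :: "'k::field grass \<Rightarrow> 'k grass" where
  "E12 h = gmul eta1 (del2 h)"

definition eta12_del1 :: "'k::field grass \<Rightarrow> 'k grass" where
  "eta12_del1 h = gmul (gmul eta1 eta2) (del1 h)"

definition eta12_del2 :: "'k::field grass \<Rightarrow> 'k grass" where
  "eta12_del2 h = gmul (gmul eta1 eta2) (del2 h)"

definition zero_der :: "'k::field grass \<Rightarrow> 'k grass" where
  "zero_der h = (\<lambda>m. 0)"

lemmas grass_simps = gadd_def gscale_def gmul_def eta1_def eta2_def del1_def del2_def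
  E11_def E22_def E21_def E12_def eta12_del1_def eta12_del2_def zero_der_def ssign_def

lemma sder_del1: "sder True (del1 :: 'k::field grass \<Rightarrow> _)"
  unfolding sder_def by (simp add: grass_eq_iff grass_simps ghomog_iff split: if_splits)

lemma sder_del2: "sder True (del2 :: 'k::field grass \<Rightarrow> _)"
  unfolding sder_def by (simp add: grass_eq_iff grass_simps ghomog_iff split: if_splits)

lemma sder_eta12_del1: "sder True (eta12_del1 :: 'k::field grass \<Rightarrow> _)"
  unfolding sder_def by (simp add: grass_eq_iff grass_simps ghomog_iff split: if_splits)

lemma sder_eta12_del2: "sder True (eta12_del2 :: 'k::field grass \<Rightarrow> _)"
  unfolding sder_def by (simp add: grass_eq_iff grass_simps ghomog_iff split: if_splits)

lemma sder_E11: "sder False (E11 :: 'k::field grass \<Rightarrow> _)"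
  unfolding sder_def by (simp add: grass_eq_iff grass_simps ghomog_iff split: if_splits)

lemma sder_E22: "sder False (E22 :: 'k::field grass \<Rightarrow> _)"
  unfolding sder_def by (simp add: grass_eq_iff grass_simps ghomog_iff split: if_splits)

lemma sder_E21: "sder False (E21 :: 'k::field grass \<Rightarrow> _)"
  unfolding sder_def by (simp add: grass_eq_iff grass_simps ghomog_iff split: if_splits)

lemma sder_E12: "sder False (E12 :: 'k::field grass \<Rightarrow> _)"
  unfolding sder_def by (simp add: grass_eq_iff grass_simps ghomog_iff split: if_splits)

lemma sder_zero_der: "sder p zero_der"
  unfolding sder_def by (simp add: grass_eq_iff grass_simps ghomog_iff)

lemma sder_in_Der: "sder p D \<Longrightarrow> D \<in> Der"
  unfolding Der_def
  by (cases p) (force intro: sder_zero_der simp: gadd_def zero_der_def)+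

definition sbracket :: "bool \<Rightarrow> bool \<Rightarrow> ('k::field grass \<Rightarrow> 'k grass) \<Rightarrow> ('k grass \<Rightarrow> 'k grass)
    \<Rightarrow> 'k grass \<Rightarrow> 'k grass" where
  "sbracket p q D E = (\<lambda>h. gadd (D (E h)) (gscale (- ssign p q) (E (D h))))"

lemma sbracket_del1_del1: "sbracket True True del1 del1 = (\<lambda>h. gscale (0::'k::field) (del1 h))"
  unfolding sbracket_def by (simp add: fun_eq_iff grass_eq_iff grass_simps)

lemma sbracket_del2_del2: "sbracket True True del2 del2 = (\<lambda>h. gscale (0::'k::field) (del2 h))"
  unfolding sbracket_def by (simp add: fun_eq_iff grass_eq_iff grass_simps)

lemma sbracket_del1_del2: "sbracket True True del1 del2 = (\<lambda>h. gscale (0::'k::field) (del1 h))"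
  unfolding sbracket_def by (simp add: fun_eq_iff grass_eq_iff grass_simps)

lemma sbracket_E21_del1: "sbracket False True E21 del1 = (\<lambda>h. gscale (0::'k::field) (del1 h))"
  unfolding sbracket_def by (simp add: fun_eq_iff grass_eq_iff grass_simps)

lemma sbracket_E21_del2: "sbracket False True E21 del2 = (\<lambda>h. gscale (-1::'k::field) (del1 h))"
  unfolding sbracket_def by (simp add: fun_eq_iff grass_eq_iff grass_simps)

lemma sbracket_E12_del1: "sbracket False True E12 del1 = (\<lambda>h. gscale (-1::'k::field) (del2 h))"
  unfolding sbracket_def by (simp add: fun_eq_iff grass_eq_iff grass_simps)

lemma sbracket_E12_del2: "sbracket False True E12 del2 = (\<lambda>h. gscale (0::'k::field) (del2 h))"
  unfolding sbracket_def by (simp add: fun_eq_iff grass_eq_iff grass_simps)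

lemma sbracket_del2_eta12_del1:
  "sbracket True True del2 eta12_del1 = (\<lambda>h. gscale (-1::'k::field) (E11 h))"
  unfolding sbracket_def by (simp add: fun_eq_iff grass_eq_iff grass_simps)

lemma sbracket_del1_eta12_del2:
  "sbracket True True del1 eta12_del2 = (\<lambda>h. gscale (1::'k::field) (E22 h))"
  unfolding sbracket_def by (simp add: fun_eq_iff grass_eq_iff grass_simps)

definition has_weight :: "bool \<Rightarrow> ('k::field grass \<Rightarrow> 'k grass) \<Rightarrow> int \<Rightarrow> int \<Rightarrow> bool" where
  "has_weight q X \<alpha> \<beta> \<longleftrightarrow>
     sbracket False q E11 X = (\<lambda>h. gscale (of_int \<alpha>) (X h)) \<and>
     sbracket False q E22 X = (\<lambda>h. gscale (of_int \<beta>) (X h))"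

lemma has_weight_del1: "has_weight True (del1 :: 'k::field grass \<Rightarrow> _) (-1) 0"
  unfolding has_weight_def sbracket_def by (simp add: fun_eq_iff grass_eq_iff grass_simps)

lemma has_weight_del2: "has_weight True (del2 :: 'k::field grass \<Rightarrow> _) 0 (-1)"
  unfolding has_weight_def sbracket_def by (simp add: fun_eq_iff grass_eq_iff grass_simps)

lemma has_weight_E21: "has_weight False (E21 :: 'k::field grass \<Rightarrow> _) (-1) 1"
  unfolding has_weight_def sbracket_def by (simp add: fun_eq_iff grass_eq_iff grass_simps)

lemma has_weight_E12: "has_weight False (E12 :: 'k::field grass \<Rightarrow> _) 1 (-1)"
  unfolding has_weight_def sbracket_def by (simp add: fun_eq_iff grass_eq_iff grass_simps)

lemma has_weight_eta12_del1: "has_weight True (eta12_del1 :: 'k::field grass \<Rightarrow> _) 0 1"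
  unfolding has_weight_def sbracket_def by (simp add: fun_eq_iff grass_eq_iff grass_simps)

lemma has_weight_eta12_del2: "has_weight True (eta12_del2 :: 'k::field grass \<Rightarrow> _) 1 0"
  unfolding has_weight_def sbracket_def by (simp add: fun_eq_iff grass_eq_iff grass_simps)

section \<open>Bigraded vector spaces\<close>

locale bigraded_space = vector_space s for s :: "'k::field_char_0 \<Rightarrow> 'v::ab_group_add \<Rightarrow> 'v" +
  fixes Vg :: "int \<Rightarrow> int \<Rightarrow> 'v set"
  assumes subspace_Vg: "subspace (Vg i j)"
    and unique_decomposition:
      "\<exists>!c. finite {ij. c ij \<noteq> 0} \<and> (\<forall>i j. c (i,j) \<in> Vg i j) \<and> v = sum c {ij. c ij \<noteq> 0}"
begin

definition component :: "'v \<Rightarrow> int \<times> int \<Rightarrow> 'v" where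
  "component v = (THE c. finite {ij. c ij \<noteq> 0} \<and> (\<forall>i j. c (i,j) \<in> Vg i j)
                          \<and> v = sum c {ij. c ij \<noteq> 0})"

lemma component_decomposition:
  "finite {ij. component v ij \<noteq> 0} \<and> (\<forall>i j. component v (i,j) \<in> Vg i j)
     \<and> v = sum (component v) {ij. component v ij \<noteq> 0}"
  unfolding component_def by (rule theI'[OF unique_decomposition])

lemma component_in_Vg: "component v (i,j) \<in> Vg i j"
  using component_decomposition by blast

lemma finite_support_component: "finite {ij. component v ij \<noteq> 0}"
  using component_decomposition by blast

lemma sum_component:
  assumes "finite S" "{ij. component v ij \<noteq> 0} \<subseteq> S"
  shows "sum (component v) S = v"
proof -
  have "sum (component v) S = sum (component v) {ij. component v ij \<noteq> 0}"
    by (rule sum.mono_neutral_right[OF assms]) auto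
  thus ?thesis using component_decomposition by metis
qed

lemma component_unique:
  assumes "finite S" "\<And>i j. c (i,j) \<in> Vg i j" "\<And>k. k \<notin> S \<Longrightarrow> c k = 0" "v = sum c S"
  shows "component v = c"
proof -
  have supp: "{ij. c ij \<noteq> 0} \<subseteq> S" using assms(3) by blast
  have "sum c S = sum c {ij. c ij \<noteq> 0}"
    by (rule sum.mono_neutral_right[OF assms(1) supp]) auto
  hence "finite {ij. c ij \<noteq> 0} \<and> (\<forall>i j. c (i,j) \<in> Vg i j) \<and> v = sum c {ij. c ij \<noteq> 0}"
    using finite_subset[OF supp assms(1)] assms by auto
  thus ?thesis unfolding component_def by (rule the1_equality[OF unique_decomposition])
qed

lemma component_add: "component (x + y) = (\<lambda>k. component x k + component y k)"
proof -
  let ?S = "{ij. component x ij \<noteq> 0} \<union> {ij. component y ij \<noteq> 0}"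
  have "x + y = (\<Sum>k\<in>?S. component x k + component y k)"
    by (simp add: sum.distrib sum_component finite_support_component)
  thus ?thesis
    by (intro component_unique[of ?S])
       (auto simp: finite_support_component subspace_add[OF subspace_Vg component_in_Vg component_in_Vg])
qed

lemma component_scale: "component (s a x) = (\<lambda>k. s a (component x k))"
proof (rule component_unique[of "{ij. component x ij \<noteq> 0}"])
  show "s a x = (\<Sum>k\<in>{ij. component x ij \<noteq> 0}. s a (component x k))"
    by (simp add: sum_component finite_support_component flip: scale_sum_right)
qed (auto simp: finite_support_component subspace_scale[OF subspace_Vg component_in_Vg])

lemma component_zero: "component 0 = (\<lambda>k. 0)"
  by (rule component_unique[of "{}"]) (auto intro: subspace_0[OF subspace_Vg])

lemma component_diff: "component (x - y) = (\<lambda>k. component x k - component y k)"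
  using component_add[of x "- y"] component_scale[of "-1" y] by simp

lemma component_homogeneous:
  "v \<in> Vg i j \<Longrightarrow> component v = (\<lambda>k. if k = (i,j) then v else 0)"
  by (rule component_unique[of "{(i,j)}"]) (auto intro: subspace_0[OF subspace_Vg])

lemma components_eq_0_imp_eq_0: "(\<And>k. component v k = 0) \<Longrightarrow> v = 0"
  using component_decomposition[of v] by simp

lemma component_sum: "finite I \<Longrightarrow> component (sum g I) = (\<lambda>k. \<Sum>i\<in>I. component (g i) k)"
  by (induct I rule: finite_induct) (auto simp: component_zero component_add)

lemma component_of_bidegree:
  assumes add: "\<And>x y. X (x + y) = X x + X y"
    and deg: "\<And>i j v. v \<in> Vg i j \<Longrightarrow> X v \<in> Vg (i+a) (j+b)"
  shows "component (X v) (i,j) = X (component v (i-a, j-b))"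
proof -
  interpret X: additive X by unfold_locales (rule add)
  let ?S = "{ij. component v ij \<noteq> 0}"
  have "X v = (\<Sum>k\<in>?S. X (component v k))"
    by (metis X.sum sum_component finite_support_component order_refl)
  hence "component (X v) (i,j) = (\<Sum>k\<in>?S. component (X (component v k)) (i,j))"
    by (simp add: component_sum finite_support_component)
  also have "\<dots> = (\<Sum>k\<in>?S. if k = (i-a, j-b) then X (component v k) else 0)"
  proof (rule sum.cong[OF refl])
    fix k :: "int \<times> int"
    obtain p q where k: "k = (p,q)" by force
    show "component (X (component v k)) (i,j) = (if k = (i-a, j-b) then X (component v k) else 0)"
      unfolding k component_homogeneous[OF deg[OF component_in_Vg]] by auto
  qed
  also have "\<dots> = X (component v (i-a, j-b))"
    by (simp add: sum.delta[OF finite_support_component] X.zero)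
  finally show ?thesis .
qed

lemma mem_Vg_if_eigenvector:
  assumes add1: "\<And>x y. E1 (x+y) = E1 x + E1 y" and add2: "\<And>x y. E2 (x+y) = E2 x + E2 y"
    and E1: "\<And>i j v. v \<in> Vg i j \<Longrightarrow> E1 v = s (of_int i) v"
    and E2: "\<And>i j v. v \<in> Vg i j \<Longrightarrow> E2 v = s (of_int j) v"
    and w1: "E1 w = s (of_int p) w" and w2: "E2 w = s (of_int q) w"
  shows "w \<in> Vg p q"
proof -
  have deg1: "E1 v \<in> Vg i j" and deg2: "E2 v \<in> Vg i j" if "v \<in> Vg i j" for v i j
    using that E1 E2 subspace_scale[OF subspace_Vg] by simp_all
  have "s (of_int i) (component w (i,j)) = s (of_int p) (component w (i,j))" for i j
    using component_of_bidegree[OF add1, of 0 0 w i j] E1[OF component_in_Vg] deg1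
    by (auto simp: w1 component_scale)
  moreover have "s (of_int j) (component w (i,j)) = s (of_int q) (component w (i,j))" for i j
    using component_of_bidegree[OF add2, of 0 0 w i j] E2[OF component_in_Vg] deg2
    by (auto simp: w2 component_scale)
  ultimately have "component w k = 0" if "k \<noteq> (p,q)" for k
    using that by (cases k) auto
  hence "w = sum (component w) {(p,q)}" by (intro sum_component[symmetric]) auto
  thus ?thesis using component_in_Vg[of w p q] by simp
qed

definition supported_on :: "(int \<times> int \<Rightarrow> bool) \<Rightarrow> 'v set" where
  "supported_on R = {v. \<forall>k. component v k \<noteq> 0 \<longrightarrow> R k}"

lemma supported_onI: "(\<And>i j. component v (i,j) \<noteq> 0 \<Longrightarrow> R (i,j)) \<Longrightarrow> v \<in> supported_on R"
  unfolding supported_on_def by auto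

lemma supported_onD: "v \<in> supported_on R \<Longrightarrow> component v (i,j) \<noteq> 0 \<Longrightarrow> R (i,j)"
  unfolding supported_on_def by auto

lemma subspace_supported_on: "subspace (supported_on R)"
  unfolding subspace_def supported_on_def
  by (auto simp: component_zero component_add component_scale) (metis add.right_neutral)

lemma supported_on_mono: "(\<And>k. R k \<Longrightarrow> R' k) \<Longrightarrow> supported_on R \<subseteq> supported_on R'"
  unfolding supported_on_def by auto

lemma homogeneous_supported_on: "v \<in> Vg i j \<Longrightarrow> R (i,j) \<Longrightarrow> v \<in> supported_on R"
  unfolding supported_on_def by (auto simp: component_homogeneous)

lemma span_Vg_eq_supported_on:
  "span (\<Union>{Vg i j | i j. R (i,j)}) = supported_on R"
proof
  show "span (\<Union>{Vg i j | i j. R (i,j)}) \<subseteq> supported_on R"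
    by (rule span_minimal[OF _ subspace_supported_on]) (auto intro: homogeneous_supported_on)
  show "supported_on R \<subseteq> span (\<Union>{Vg i j | i j. R (i,j)})"
  proof
    fix v assume v: "v \<in> supported_on R"
    have "component v k \<in> span (\<Union>{Vg i j | i j. R (i,j)})" if "component v k \<noteq> 0" for k
      using that supported_onD[OF v] component_in_Vg by (cases k) (blast intro: span_base)
    hence "sum (component v) {ij. component v ij \<noteq> 0} \<in> span (\<Union>{Vg i j | i j. R (i,j)})"
      by (intro span_sum) auto
    thus "v \<in> span (\<Union>{Vg i j | i j. R (i,j)})"
      by (simp add: sum_component finite_support_component)
  qed
qed

end

lemma (in vector_space) scale_two: "scale 2 x = x + x"
  using scale_left_distrib[of 1 1 x] by (simp add: one_add_one)

section \<open>Double complexes with contractible nonzero columns\<close>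

locale column_contraction = bigraded_space s Vg
    for s :: "'k::field_char_0 \<Rightarrow> 'v::ab_group_add \<Rightarrow> 'v" and Vg +
  fixes N :: int and P Q A K :: "'v \<Rightarrow> 'v" and c :: 'k
  assumes Vg_below: "i < N \<or> j < N \<Longrightarrow> Vg i j = {0}"
    and lin_P: "lin_on s UNIV P" and lin_Q: "lin_on s UNIV Q"
    and lin_A: "lin_on s UNIV A" and lin_K: "lin_on s UNIV K"
    and P_bidegree: "v \<in> Vg i j \<Longrightarrow> P v \<in> Vg (i+1) j"
    and Q_bidegree: "v \<in> Vg i j \<Longrightarrow> Q v \<in> Vg i (j+1)"
    and A_bidegree: "v \<in> Vg i j \<Longrightarrow> A v \<in> Vg (i+1) (j-1)"
    and K_bidegree: "v \<in> Vg i j \<Longrightarrow> K v \<in> Vg i (j-1)"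
    and P_P: "P (P v) = 0" and Q_Q: "Q (Q v) = 0" and P_Q: "P (Q v) + Q (P v) = 0"
    and A_Q: "A (Q v) - Q (A v) = P v" and A_P: "A (P v) = P (A v)"
    and Q_K: "v \<in> Vg i j \<Longrightarrow> Q (K v) + K (Q v) = s (c * of_int i) v"
    and c_nonzero: "c \<noteq> 0"
begin

lemma
  shows P_add: "P (x + y) = P x + P y" and P_scale: "P (s a x) = s a (P x)"
    and Q_add: "Q (x + y) = Q x + Q y" and Q_scale: "Q (s a x) = s a (Q x)"
    and A_add: "A (x + y) = A x + A y" and A_scale: "A (s a x) = s a (A x)"
    and K_add: "K (x + y) = K x + K y"
  using lin_P lin_Q lin_A lin_K unfolding lin_on_def by blast+

sublocale P: additive P by unfold_locales (rule P_add)
sublocale Q: additive Q by unfold_locales (rule Q_add)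
sublocale A: additive A by unfold_locales (rule A_add)
sublocale K: additive K by unfold_locales (rule K_add)

lemma A_pow_add: "(A^^k) (x + y) = (A^^k) x + (A^^k) y"
  by (induct k) (auto simp: A_add)

lemma A_pow_scale: "(A^^k) (s a x) = s a ((A^^k) x)"
  by (induct k) (auto simp: A_scale)

lemma A_pow_zero: "(A^^k) 0 = 0"
  by (induct k) (auto simp: A.zero)

lemma A_pow_bidegree: "v \<in> Vg i j \<Longrightarrow> (A^^k) v \<in> Vg (i + int k) (j - int k)"
proof (induct k)
  case (Suc k)
  have "A ((A^^k) v) \<in> Vg (i + int k + 1) (j - int k - 1)"
    using A_bidegree Suc by blast
  thus ?case by (simp add: algebra_simps)
qed simp

lemma P_A_pow: "P ((A^^k) v) = (A^^k) (P v)"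
  by (induct k) (auto simp: A_P[symmetric])

lemma Q_A_pow_Suc: "Q ((A^^Suc k) v) = (A^^Suc k) (Q v) - s (of_nat (Suc k)) ((A^^k) (P v))"
proof (induct k)
  case 0
  show ?case using A_Q[of v] by (simp add: algebra_simps)
next
  case (Suc k)
  have "Q ((A^^Suc (Suc k)) v) = A (Q ((A^^Suc k) v)) - P ((A^^Suc k) v)"
    using A_Q[of "(A^^Suc k) v"] by (simp add: algebra_simps)
  also have "\<dots> = A ((A^^Suc k) (Q v)) - A (s (of_nat (Suc k)) ((A^^k) (P v))) - (A^^Suc k) (P v)"
    by (simp add: Suc A.diff P_A_pow del: funpow.simps)
  also have "\<dots> = (A^^Suc (Suc k)) (Q v) - s (of_nat (Suc (Suc k))) ((A^^Suc k) (P v))"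
    by (simp add: A_add A_scale scale_left_distrib scale_two algebra_simps)
  finally show ?case .
qed

definition dtot :: "'v \<Rightarrow> 'v" where
  "dtot v = P v + Q v"

lemma dtot_add: "dtot (x + y) = dtot x + dtot y"
  unfolding dtot_def by (simp add: P_add Q_add algebra_simps)

lemma dtot_scale: "dtot (s a x) = s a (dtot x)"
  unfolding dtot_def by (simp add: P_scale Q_scale scale_right_distrib)

sublocale dtot: additive dtot by unfold_locales (rule dtot_add)

lemma dtot_dtot: "dtot (dtot v) = 0"
  unfolding dtot_def using P_Q[of v] by (simp add: P_add Q_add P_P Q_Q algebra_simps)

definition tot :: "int \<Rightarrow> 'v set" where
  "tot n = supported_on (\<lambda>(i,j). i + j = n)"

definition tot_from :: "int \<Rightarrow> int \<Rightarrow> 'v set" where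
  "tot_from n m = supported_on (\<lambda>(i,j). i + j = n \<and> m \<le> i)"

lemma subspace_tot: "subspace (tot n)"
  unfolding tot_def by (rule subspace_supported_on)

lemma subspace_tot_from: "subspace (tot_from n m)"
  unfolding tot_from_def by (rule subspace_supported_on)

lemma tot_from_antimono: "m' \<le> m \<Longrightarrow> tot_from n m \<subseteq> tot_from n m'"
  unfolding tot_from_def by (rule supported_on_mono) auto

lemma tot_from_subset_tot: "tot_from n m \<subseteq> tot n"
  unfolding tot_from_def tot_def by (rule supported_on_mono) auto

lemma component_nonzero_imp_ge: "component v (i,j) \<noteq> 0 \<Longrightarrow> N \<le> i \<and> N \<le> j"
  using component_in_Vg[of v i j] Vg_below[of i j] by force

lemma tot_subset_tot_from: "m \<le> N \<Longrightarrow> tot n \<subseteq> tot_from n m"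
  unfolding tot_from_def tot_def supported_on_def
  by (force dest: component_nonzero_imp_ge)

lemma tot_from_trivial:
  assumes "n - N < m" shows "tot_from n m \<subseteq> {0}"
proof
  fix v assume v: "v \<in> tot_from n m"
  have "component v (i,j) = 0" for i j
    using supported_onD[OF v[unfolded tot_from_def], of i j] component_nonzero_imp_ge[of v i j] assms
    by fastforce
  thus "v \<in> {0}" using components_eq_0_imp_eq_0 by auto
qed

lemma Vg_subset_tot_from: "i + j = n \<Longrightarrow> m \<le> i \<Longrightarrow> Vg i j \<subseteq> tot_from n m"
  unfolding tot_from_def by (auto intro: homogeneous_supported_on)

lemma Vg_subset_tot: "i + j = n \<Longrightarrow> Vg i j \<subseteq> tot n"
  unfolding tot_def by (auto intro: homogeneous_supported_on)

lemma component_dtot: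
  "component (dtot v) (i,j) = P (component v (i-1, j)) + Q (component v (i, j-1))"
  using component_of_bidegree[OF P_add, of 1 0 v i j] component_of_bidegree[OF Q_add, of 0 1 v i j]
    P_bidegree Q_bidegree
  by (simp add: dtot_def component_add)

lemma component_dtot_column0:
  assumes "v \<in> tot_from n 0" shows "component (dtot v) (0,j) = Q (component v (0, j-1))"
proof -
  have "component v (-1, j) = 0"
    using supported_onD[OF assms[unfolded tot_from_def], of "-1" j] by auto
  thus ?thesis by (simp add: component_dtot P.zero)
qed

lemma dtot_tot:
  assumes v: "v \<in> tot n" shows "dtot v \<in> tot (n+1)"
  unfolding tot_def
proof (rule supported_onI)
  fix i j assume "component (dtot v) (i,j) \<noteq> 0"
  hence "component v (i-1,j) \<noteq> 0 \<or> component v (i,j-1) \<noteq> 0"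
    by (auto simp: component_dtot P.zero Q.zero)
  thus "case (i,j) of (i,j) \<Rightarrow> i + j = n + 1"
    using supported_onD[OF v[unfolded tot_def]] by force
qed

lemma tot_from_minus_lowest_component:
  assumes y: "y \<in> tot_from n m" shows "y - component y (m, n-m) \<in> tot_from n (m+1)"
  unfolding tot_from_def
proof (rule supported_onI)
  fix i j assume nz: "component (y - component y (m, n-m)) (i,j) \<noteq> 0"
  hence "component y (i,j) \<noteq> 0" and "(i,j) \<noteq> (m, n-m)"
    by (auto simp: component_diff component_homogeneous[OF component_in_Vg] split: if_splits)
  thus "case (i,j) of (i,j) \<Rightarrow> i + j = n \<and> m + 1 \<le> i"
    using supported_onD[OF y[unfolded tot_from_def]] by force
qed

text \<open>On a column \<open>m \<noteq> 0\<close> the bracket \<open>[Q, K]\<close> acts invertibly, so the lowest component of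
  \<open>y\<close>, a \<open>Q\<close>-cocycle, is \<open>dtot\<close> of something up to a term one column further right.\<close>

lemma dtot_clears_lowest_column:
  assumes y: "y \<in> tot_from n m" and m: "m \<noteq> 0" and dy: "dtot y \<in> tot_from (n+1) (m+1)"
  shows "\<exists>t \<in> tot (n-1). y - dtot t \<in> tot_from n (m+1)"
proof -
  define ym where "ym = component y (m, n-m)"
  define r where "r = inverse (c * of_int m)"
  define t where "t = s r (K ym)"
  have ym: "ym \<in> Vg m (n-m)" unfolding ym_def by (rule component_in_Vg)
  have Kym: "K ym \<in> Vg m (n-m-1)" by (rule K_bidegree[OF ym])
  have "component y (m-1, n-m+1) = 0"
    using supported_onD[OF y[unfolded tot_from_def], of "m-1" "n-m+1"] by auto
  moreover have "component (dtot y) (m, n-m+1) = 0"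
    using supported_onD[OF dy[unfolded tot_from_def], of m "n-m+1"] by auto
  ultimately have "Q ym = 0" by (simp add: component_dtot ym_def P.zero)
  hence "Q (K ym) = s (c * of_int m) ym" using Q_K[OF ym] by (simp add: K.zero)
  moreover have "r * (c * of_int m) = 1"
    unfolding r_def using c_nonzero m by (intro left_inverse) simp
  ultimately have dt: "dtot t = ym + s r (P (K ym))"
    by (simp add: t_def dtot_def P_scale Q_scale add.commute)
  have "y - ym \<in> tot_from n (m+1)"
    unfolding ym_def by (rule tot_from_minus_lowest_component[OF y])
  moreover have "s r (P (K ym)) \<in> tot_from n (m+1)"
    using subspace_scale[OF subspace_Vg P_bidegree[OF Kym]] Vg_subset_tot_from[of "m+1" "n-m-1" n]
    by auto
  ultimately have "(y - ym) - s r (P (K ym)) \<in> tot_from n (m+1)"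
    by (rule subspace_diff[OF subspace_tot_from])
  hence "y - dtot t \<in> tot_from n (m+1)" by (simp add: dt algebra_simps)
  moreover have "K ym \<in> tot (n-1)" using Kym Vg_subset_tot[of m "n-m-1" "n-1"] by auto
  hence "t \<in> tot (n-1)" unfolding t_def by (rule subspace_scale[OF subspace_tot])
  ultimately show ?thesis by blast
qed

lemma dtot_clears_columns:
  assumes "0 \<notin> {m..<m + int k}" and "y \<in> tot_from n m" and "dtot y \<in> tot_from (n+1) (m + int k)"
  shows "\<exists>t \<in> tot (n-1). y - dtot t \<in> tot_from n (m + int k)"
  using assms
proof (induct k arbitrary: m y)
  case 0
  show ?case
    using "0.prems"(2) subspace_0[OF subspace_tot] by (intro bexI[of _ 0]) (simp_all add: dtot.zero)
next
  case (Suc k)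
  have "dtot y \<in> tot_from (n+1) (m+1)"
    using Suc.prems(3) tot_from_antimono[of "m+1" "m + int (Suc k)"] by auto
  then obtain t1 where t1: "t1 \<in> tot (n-1)" and y1: "y - dtot t1 \<in> tot_from n (m+1)"
    using dtot_clears_lowest_column[OF Suc.prems(2)] Suc.prems(1) by auto
  have "\<exists>t2 \<in> tot (n-1). (y - dtot t1) - dtot t2 \<in> tot_from n (m + 1 + int k)"
  proof (rule Suc.hyps)
    show "0 \<notin> {m+1..<m + 1 + int k}" using Suc.prems(1) by auto
    show "dtot (y - dtot t1) \<in> tot_from (n+1) (m + 1 + int k)"
      using Suc.prems(3) by (simp add: dtot.diff dtot_dtot add.assoc)
  qed (rule y1)
  then obtain t2 where t2: "t2 \<in> tot (n-1)" and "y - dtot (t1 + t2) \<in> tot_from n (m + int (Suc k))"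
    by (auto simp: dtot_add diff_diff_eq add.assoc)
  moreover have "t1 + t2 \<in> tot (n-1)" by (rule subspace_add[OF subspace_tot t1 t2])
  ultimately show ?case by blast
qed

lemma homologous_into_tot_from0:
  assumes "y \<in> tot n" and "dtot y \<in> tot_from (n+1) 0"
  shows "\<exists>t \<in> tot (n-1). y - dtot t \<in> tot_from n 0"
proof -
  have "y \<in> tot_from n (min N 0)" using assms(1) tot_subset_tot_from[of "min N 0"] by auto
  thus ?thesis
    using dtot_clears_columns[of "min N 0" "nat (- min N 0)"] assms(2) by auto
qed

lemma cocycle_in_tot_from1_exact:
  assumes "y \<in> tot_from n 1" and "dtot y = 0"
  shows "\<exists>t \<in> tot (n-1). y = dtot t"
proof -
  let ?k = "nat (n - N)"
  have "dtot y \<in> tot_from (n+1) (1 + int ?k)" using assms(2) subspace_0[OF subspace_tot_from] by simp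
  then obtain t where t: "t \<in> tot (n-1)" and "y - dtot t \<in> tot_from n (1 + int ?k)"
    using dtot_clears_columns[of 1 ?k] assms(1) by auto
  moreover have "tot_from n (1 + int ?k) \<subseteq> {0}" by (rule tot_from_trivial) simp
  ultimately have "y - dtot t = 0" by blast
  thus ?thesis using t by auto
qed


definition expA_trunc :: "nat \<Rightarrow> 'v \<Rightarrow> 'v" where
  "expA_trunc M v = (\<Sum>k<M. s (inverse (fact k)) ((A^^k) v))"

text \<open>\<open>A\<close> is nilpotent on each \<open>tot n\<close> (the bigrading is bounded below), so \<open>exp A\<close> can be
  taken to be the truncation at the nilpotency index.\<close>

definition expA :: "'v \<Rightarrow> 'v" where
  "expA v = expA_trunc (LEAST M. (A^^M) v = 0) v"

lemma A_pow_nilpotent_on_tot: "\<exists>M. \<forall>v \<in> tot n. \<forall>k \<ge> M. (A^^k) v = 0"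
proof (intro exI ballI allI impI)
  fix v k assume v: "v \<in> tot n" and k: "nat (n - 2 * N + 1) \<le> k"
  have deg: "(A^^k) w \<in> Vg (i + int k) (j + - int k)" if "w \<in> Vg i j" for w i j
    using A_pow_bidegree[OF that] by simp
  have shift: "component ((A^^k) v) (i,j) = (A^^k) (component v (i - int k, j + int k))" for i j
    using component_of_bidegree[of "A^^k", OF A_pow_add deg] by simp
  have "component ((A^^k) v) (i,j) = 0" for i j
  proof (cases "component v (i - int k, j + int k) = 0")
    case False
    have "i - int k + (j + int k) = n"
      using supported_onD[OF v[unfolded tot_def] False] by simp
    moreover have "N \<le> i - int k" using component_nonzero_imp_ge[OF False] by simp
    ultimately have "Vg i j = {0}" using k Vg_below by simp
    thus ?thesis using component_in_Vg by auto
  qed (simp add: shift A_pow_zero)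
  thus "(A^^k) v = 0" using components_eq_0_imp_eq_0 by auto
qed

lemma A_pow_eq_0_mono: "(A^^m) v = 0 \<Longrightarrow> m \<le> k \<Longrightarrow> (A^^k) v = 0"
  by (metis A_pow_zero funpow_add le_add_diff_inverse2 o_apply)

lemma expA_eq_trunc:
  assumes "(A^^m) v = 0" "m \<le> M" shows "expA v = expA_trunc M v"
proof -
  define L where "L = (LEAST m. (A^^m) v = 0)"
  have "L \<le> m" unfolding L_def using assms(1) by (rule Least_le)
  moreover have "(A^^L) v = 0" unfolding L_def by (rule LeastI[of _ m]) (rule assms(1))
  ultimately have "expA_trunc M v = expA_trunc L v"
    unfolding expA_trunc_def using assms(2) A_pow_eq_0_mono
    by (intro sum.mono_neutral_right) auto
  thus ?thesis unfolding expA_def L_def by simp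
qed

lemma expA_eq_trunc_on_tot: "\<exists>M. \<forall>M' \<ge> M. \<forall>v \<in> tot n. expA v = expA_trunc M' v"
  using A_pow_nilpotent_on_tot expA_eq_trunc by blast

lemma expA_trunc_add: "expA_trunc M (x + y) = expA_trunc M x + expA_trunc M y"
  unfolding expA_trunc_def by (simp add: A_pow_add scale_right_distrib sum.distrib)

lemma expA_trunc_scale: "expA_trunc M (s a x) = s a (expA_trunc M x)"
  unfolding expA_trunc_def by (simp add: A_pow_scale scale_sum_right mult.commute)

text \<open>Because \<open>[Q, A\<^sup>k\<^sup>+\<^sup>1/(k+1)!] = -P A\<^sup>k/k!\<close>, the sum telescopes: \<open>dtot\<close> intertwines
  \<open>exp A\<close> with \<open>Q\<close> up to a term of the order of the truncation.\<close>

lemma dtot_expA_trunc: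
  "dtot (expA_trunc (Suc M) v) = expA_trunc (Suc M) (Q v) + s (inverse (fact M)) ((A^^M) (P v))"
proof (induct M)
  case 0
  show ?case by (simp add: expA_trunc_def dtot_def add.commute)
next
  case (Suc M)
  have fact_Suc: "inverse (fact (Suc M)) * of_nat (Suc M) = (inverse (fact M) :: 'k)"
    by (simp add: field_simps del: of_nat_Suc)
  have "dtot (expA_trunc (Suc (Suc M)) v)
      = dtot (expA_trunc (Suc M) v) + s (inverse (fact (Suc M))) (P ((A^^Suc M) v) + Q ((A^^Suc M) v))"
    unfolding expA_trunc_def by (simp only: sum.lessThan_Suc dtot_add dtot_scale) (simp add: dtot_def)
  also have "\<dots> = expA_trunc (Suc M) (Q v) + s (inverse (fact M)) ((A^^M) (P v))
      + s (inverse (fact (Suc M))) ((A^^Suc M) (P v)) + s (inverse (fact (Suc M))) ((A^^Suc M) (Q v))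
      - s (inverse (fact (Suc M)) * of_nat (Suc M)) ((A^^M) (P v))"
    unfolding Suc P_A_pow Q_A_pow_Suc
    by (simp add: scale_right_distrib scale_right_diff_distrib algebra_simps
             del: funpow.simps of_nat_Suc)
  also have "\<dots> = expA_trunc (Suc (Suc M)) (Q v) + s (inverse (fact (Suc M))) ((A^^Suc M) (P v))"
    unfolding fact_Suc expA_trunc_def by (simp del: funpow.simps)
  finally show ?case .
qed

lemma expA_trunc_minus_column0: "z \<in> Vg 0 n \<Longrightarrow> expA_trunc (Suc M) z - z \<in> tot_from n 1"
proof (induct M)
  case 0
  thus ?case by (simp add: expA_trunc_def subspace_0[OF subspace_tot_from])
next
  case (Suc M)
  have "expA_trunc (Suc (Suc M)) z - z
      = (expA_trunc (Suc M) z - z) + s (inverse (fact (Suc M))) ((A^^Suc M) z)"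
    unfolding expA_trunc_def by (simp del: funpow.simps)
  moreover have "(A^^Suc M) z \<in> tot_from n 1"
    using A_pow_bidegree[OF Suc.prems, of "Suc M"] Vg_subset_tot_from[of "int (Suc M)" "n - int (Suc M)" n 1]
    by (simp add: subset_iff del: funpow.simps)
  ultimately show ?case
    using Suc subspace_add[OF subspace_tot_from] subspace_scale[OF subspace_tot_from] by metis
qed

lemma expA_minus_column0:
  assumes "z \<in> Vg 0 n" shows "expA z - z \<in> tot_from n 1"
proof -
  obtain M where "\<forall>M' \<ge> M. \<forall>v \<in> tot n. expA v = expA_trunc M' v"
    using expA_eq_trunc_on_tot by blast
  moreover have "z \<in> tot n" using assms Vg_subset_tot[of 0 n n] by auto
  ultimately have "expA z = expA_trunc (Suc M) z" by simp
  thus ?thesis using expA_trunc_minus_column0[OF assms] by simp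
qed

lemma expA_column0_in_tot_from0:
  assumes "z \<in> Vg 0 n" shows "expA z \<in> tot_from n 0"
proof -
  have "expA z - z \<in> tot_from n 0" using expA_minus_column0[OF assms] tot_from_antimono[of 0 1] by auto
  moreover have "z \<in> tot_from n 0" using assms Vg_subset_tot_from[of 0 n n 0] by auto
  ultimately show ?thesis using subspace_add[OF subspace_tot_from] by fastforce
qed

lemma component_expA_column0:
  assumes "z \<in> Vg 0 n" shows "component (expA z) (0,n) = z"
proof -
  have "component (expA z - z) (0,n) = 0"
    using supported_onD[OF expA_minus_column0[OF assms, unfolded tot_from_def], of 0 n] by auto
  thus ?thesis by (simp add: component_diff component_homogeneous[OF assms])
qed

lemma expA_chain_map:
  assumes z: "z \<in> Vg 0 n" shows "expA (Q z) = dtot (expA z)"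
proof -
  obtain M0 where M0: "\<forall>v \<in> tot n. \<forall>k \<ge> M0. (A^^k) v = 0"
    using A_pow_nilpotent_on_tot by blast
  obtain M1 where M1: "\<forall>M' \<ge> M1. \<forall>v \<in> tot n. expA v = expA_trunc M' v"
    using expA_eq_trunc_on_tot by blast
  obtain M2 where M2: "\<forall>M' \<ge> M2. \<forall>v \<in> tot (n+1). expA v = expA_trunc M' v"
    using expA_eq_trunc_on_tot by blast
  define M where "M = max M0 (max M1 M2)"
  have "z \<in> tot n" and "Q z \<in> tot (n+1)"
    using z Q_bidegree[OF z] Vg_subset_tot[of 0 n n] Vg_subset_tot[of 0 "n+1" "n+1"] by auto
  moreover have "(A^^M) (P z) = 0"
    using M0 \<open>z \<in> tot n\<close> by (simp add: M_def P.zero flip: P_A_pow)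
  ultimately show ?thesis
    using dtot_expA_trunc[of M z] M1[rule_format, of "Suc M" z] M2[rule_format, of "Suc M" "Q z"]
    by (simp add: M_def)
qed

lemma expA_add_scale:
  assumes "x \<in> Vg 0 n" "y \<in> Vg 0 n"
  shows "expA (x + y) = expA x + expA y" and "expA (s a x) = s a (expA x)"
proof -
  obtain M where M: "\<forall>v \<in> tot n. expA v = expA_trunc M v"
    using expA_eq_trunc_on_tot[of n] by blast
  have "x + y \<in> tot n" "s a x \<in> tot n" "x \<in> tot n" "y \<in> tot n"
    using assms subspace_add[OF subspace_Vg] subspace_scale[OF subspace_Vg] Vg_subset_tot[of 0 n n]
    by auto
  thus "expA (x + y) = expA x + expA y" and "expA (s a x) = s a (expA x)"
    by (simp_all add: M expA_trunc_add expA_trunc_scale)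
qed


lemma expA_zero: "expA 0 = 0"
  by (simp add: expA_def expA_trunc_def A_pow_zero)

lemma Tot_eq_tot: "Tot s Vg = tot"
proof
  fix n
  show "Tot s Vg n = tot n"
    using span_Vg_eq_supported_on[of "\<lambda>(i,j). i + j = n"] by (simp add: Tot_def tot_def)
qed

lemma expA_injective_on_cohomology:
  assumes z: "z \<in> Vg 0 n" and y: "y \<in> tot (n-1)" and e: "expA z = dtot y"
  shows "\<exists>x \<in> Vg 0 (n-1). z = Q x"
proof -
  have "dtot y \<in> tot_from (n - 1 + 1) 0" using expA_column0_in_tot_from0[OF z] e by simp
  then obtain t where y': "y - dtot t \<in> tot_from (n-1) 0"
    using homologous_into_tot_from0[OF y] by blast
  have "dtot (y - dtot t) = expA z" by (simp add: e dtot.diff dtot_dtot)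
  hence "z = Q (component (y - dtot t) (0, n-1))"
    using component_dtot_column0[OF y', of n] component_expA_column0[OF z] by simp
  thus ?thesis using component_in_Vg by blast
qed

lemma expA_surjective_on_cohomology:
  assumes w: "w \<in> tot n" and dw: "dtot w = 0"
  shows "\<exists>z \<in> Vg 0 n. Q z = 0 \<and> (\<exists>y \<in> tot (n-1). w = expA z + dtot y)"
proof -
  obtain t where t: "t \<in> tot (n-1)" and u: "w - dtot t \<in> tot_from n 0"
    using homologous_into_tot_from0[OF w] dw subspace_0[OF subspace_tot_from] by auto
  define z where "z = component (w - dtot t) (0,n)"
  have z: "z \<in> Vg 0 n" unfolding z_def by (rule component_in_Vg)
  have du: "dtot (w - dtot t) = 0" by (simp add: dw dtot.diff dtot_dtot)
  hence Qz: "Q z = 0"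
    using component_dtot_column0[OF u, of "n+1"] by (simp add: z_def component_zero)
  have "(w - dtot t - z) - (expA z - z) \<in> tot_from n 1"
    using tot_from_minus_lowest_component[OF u, simplified] expA_minus_column0[OF z]
    unfolding z_def by (rule subspace_diff[OF subspace_tot_from])
  hence "w - dtot t - expA z \<in> tot_from n 1" by simp
  moreover have "dtot (w - dtot t - expA z) = 0"
    using du expA_chain_map[OF z] by (simp add: dtot.diff Qz expA_zero)
  ultimately obtain t2 where t2: "t2 \<in> tot (n-1)" and "w - dtot t - expA z = dtot t2"
    using cocycle_in_tot_from1_exact by fastforce
  hence "w = expA z + dtot (t + t2)" by (simp add: dtot_add algebra_simps)
  thus ?thesis using z Qz subspace_add[OF subspace_tot t t2] by blast
qed

theorem quasi_iso_expA: "quasi_iso s (col0 Vg) Q (Tot s Vg) dtot expA"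
  unfolding quasi_iso_def Tot_eq_tot col0_def
proof (intro conjI allI impI ballI)
  show "cochain_complex s (\<lambda>n. Vg 0 n) Q"
    unfolding cochain_complex_def lin_on_def
    using subspace_Vg Q_add Q_scale Q_bidegree Q_Q by auto
  show "cochain_complex s tot dtot"
    unfolding cochain_complex_def lin_on_def
    using subspace_tot dtot_add dtot_scale dtot_tot dtot_dtot by auto
  fix n
  show "lin_on s (Vg 0 n) expA" unfolding lin_on_def using expA_add_scale by blast
  show "expA ` Vg 0 n \<subseteq> tot n" using expA_column0_in_tot_from0 tot_from_subset_tot by blast
  show "\<And>z. z \<in> Vg 0 n \<Longrightarrow> expA (Q z) = dtot (expA z)" by (rule expA_chain_map)
next
  fix n z
  assume "z \<in> Vg 0 n \<and> Q z = 0 \<and> (\<exists>y \<in> tot (n - 1). expA z = dtot y)"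
  thus "\<exists>x \<in> Vg 0 (n - 1). z = Q x" using expA_injective_on_cohomology by blast
next
  fix n w
  assume "w \<in> tot n \<and> dtot w = 0"
  thus "\<exists>z \<in> Vg 0 n. Q z = 0 \<and> (\<exists>y \<in> tot (n - 1). w = expA z + dtot y)"
    using expA_surjective_on_cohomology by blast
qed

end

section \<open>Transposing the bigrading\<close>

lemma unique_decomposition_transpose:
  fixes Vg :: "int \<Rightarrow> int \<Rightarrow> 'a::comm_monoid_add set"
  assumes "\<And>v. \<exists>!c. finite {ij. c ij \<noteq> 0} \<and> (\<forall>i j. c (i,j) \<in> Vg i j) \<and> v = sum c {ij. c ij \<noteq> 0}"
  shows "\<exists>!c. finite {ij. c ij \<noteq> 0} \<and> (\<forall>i j. c (i,j) \<in> Vg j i) \<and> v = sum c {ij. c ij \<noteq> 0}"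
proof -
  define decomposes where "decomposes W c \<longleftrightarrow>
      finite {ij. c ij \<noteq> 0} \<and> (\<forall>i j. c (i,j) \<in> W i j) \<and> v = sum c {ij. c ij \<noteq> (0::'a)}"
    for W :: "int \<Rightarrow> int \<Rightarrow> 'a set" and c
  have swap: "decomposes (\<lambda>i j. Vg j i) c \<longleftrightarrow> decomposes Vg (c \<circ> prod.swap)" for c
  proof -
    have supp: "{ij. (c \<circ> prod.swap) ij \<noteq> 0} = prod.swap ` {ij. c ij \<noteq> 0}"
      by (auto simp: image_iff)
    have "finite {ij. (c \<circ> prod.swap) ij \<noteq> 0} \<longleftrightarrow> finite {ij. c ij \<noteq> 0}"
      unfolding supp by (rule finite_image_iff) simp
    moreover have "sum (c \<circ> prod.swap) {ij. (c \<circ> prod.swap) ij \<noteq> 0} = sum c {ij. c ij \<noteq> 0}"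
      unfolding supp by (subst sum.reindex) (auto simp: comp_def)
    ultimately show ?thesis unfolding decomposes_def by auto
  qed
  obtain c0 where c0: "decomposes Vg c0" and unique: "\<And>c. decomposes Vg c \<Longrightarrow> c = c0"
    using assms unfolding decomposes_def by metis
  have "decomposes (\<lambda>i j. Vg j i) (c0 \<circ> prod.swap)" unfolding swap by (simp add: comp_def c0)
  moreover have "c = c0 \<circ> prod.swap" if "decomposes (\<lambda>i j. Vg j i) c" for c
    using unique[of "c \<circ> prod.swap"] that swap by (auto simp: fun_eq_iff)
  ultimately show ?thesis unfolding decomposes_def by blast
qed

lemma (in bigraded_space) bigraded_space_transpose: "bigraded_space s (\<lambda>i j. Vg j i)"
proof
  show "\<exists>!c. finite {ij. c ij \<noteq> 0} \<and> (\<forall>i j. c (i,j) \<in> Vg j i) \<and> v = sum c {ij. c ij \<noteq> 0}"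
    for v by (rule unique_decomposition_transpose[OF unique_decomposition])
qed (rule subspace_Vg)

lemma Tot_transpose: "Tot s (\<lambda>i j. Vg j i) = Tot s Vg"
proof -
  have "{Vg j i | i j. i + j = n} = {Vg i j | i j. i + j = n}" for n :: int
    by (metis add.commute)
  thus ?thesis by (simp add: fun_eq_iff Tot_def)
qed

lemma col0_transpose: "col0 (\<lambda>i j. Vg j i) = row0 Vg"
  by (simp add: fun_eq_iff col0_def row0_def)

lemma quasi_isomorphic_if_quasi_iso:
  "quasi_iso s C d C' d' f \<Longrightarrow> quasi_isomorphic s C' d' C d"
  unfolding quasi_isomorphic_def by (blast intro: equivclp_sym r_into_equivclp)

section \<open>\<open>N = 2\<close> supersymmetric complexes\<close>

locale N2_bounded_complex =
  fixes s :: "'k::field_char_0 \<Rightarrow> 'v::ab_group_add \<Rightarrow> 'v" and Vpar :: "bool \<Rightarrow> 'v set"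
    and Vg :: "int \<Rightarrow> int \<Rightarrow> 'v set" and \<rho> :: "('k grass \<Rightarrow> 'k grass) \<Rightarrow> 'v \<Rightarrow> 'v" and N :: int
  assumes N2: "N2_susy_complex s Vpar Vg \<rho>"
    and Vg_below: "i < N \<or> j < N \<Longrightarrow> Vg i j = {0}"
begin

lemma N2_vector_space: "vector_space s"
  using N2 unfolding N2_susy_complex_def by blast

lemma N2_subspace_Vg: "\<forall>i j. module.subspace s (Vg i j)"
  using N2 unfolding N2_susy_complex_def by (elim conjE) assumption

lemma N2_unique_decomposition:
  "\<forall>v. \<exists>!c. finite {ij. c ij \<noteq> 0} \<and> (\<forall>i j. c (i,j) \<in> Vg i j) \<and> v = sum c {ij. c ij \<noteq> 0}"
  using N2 unfolding N2_susy_complex_def by (elim conjE) assumption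

sublocale bigraded_space s Vg
  using N2_vector_space N2_subspace_Vg N2_unique_decomposition
  by (intro bigraded_space.intro bigraded_space_axioms.intro) auto

lemma rho_lin_on: "sder p D \<Longrightarrow> lin_on s UNIV (\<rho> D)"
  using N2 unfolding N2_susy_complex_def by blast

lemma rho_Euler:
  "v \<in> Vg i j \<Longrightarrow> \<rho> E11 v = s (of_int i) v" "v \<in> Vg i j \<Longrightarrow> \<rho> E22 v = s (of_int j) v"
  using N2 unfolding N2_susy_complex_def by blast+

lemma rho_add: "sder p D \<Longrightarrow> \<rho> D (x + y) = \<rho> D x + \<rho> D y"
  using rho_lin_on unfolding lin_on_def by blast

lemma rho_scale: "sder p D \<Longrightarrow> \<rho> D (s a x) = s a (\<rho> D x)"
  using rho_lin_on unfolding lin_on_def by blast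

text \<open>The axioms transport to \<open>V\<close> only brackets of homogeneous superderivations and scalar
  multiples of elements of \<open>Der\<close>; this is why relations in \<open>Der\<close> are stated as \<open>[D, E] = a X\<close>.\<close>

lemma rho_sbracket:
  assumes "sder p D" "sder q E" "sbracket p q D E = (\<lambda>h. gscale a (X h))" "sder r X"
  shows "\<rho> D (\<rho> E v) - s (ssign p q) (\<rho> E (\<rho> D v)) = - s a (\<rho> X v)"
proof -
  have "\<rho> (sbracket p q D E) v = - (\<rho> D (\<rho> E v) - s (ssign p q) (\<rho> E (\<rho> D v)))"
    using N2 assms(1,2) unfolding N2_susy_complex_def sbracket_def by simp
  moreover have "\<rho> (\<lambda>h. gscale a (X h)) v = s a (\<rho> X v)"
    using N2 sder_in_Der[OF assms(4)] unfolding N2_susy_complex_def by simp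
  ultimately show ?thesis using assms(3) by (simp add: minus_equation_iff)
qed

text \<open>The infinitesimal action reverses brackets, so a field of weight \<open>(\<alpha>, \<beta>)\<close> has
  bidegree \<open>(-\<alpha>, -\<beta>)\<close>.\<close>

lemma rho_bidegree:
  assumes X: "sder q X" and w: "has_weight q X \<alpha> \<beta>" and v: "v \<in> Vg i j"
  shows "\<rho> X v \<in> Vg (i - \<alpha>) (j - \<beta>)"
proof (rule mem_Vg_if_eigenvector)
  show "\<rho> E11 (x + y) = \<rho> E11 x + \<rho> E11 y" "\<rho> E22 (x + y) = \<rho> E22 x + \<rho> E22 y" for x y
    by (rule rho_add[OF sder_E11], rule rho_add[OF sder_E22])
  have "\<rho> E11 (\<rho> X v) - \<rho> X (\<rho> E11 v) = - s (of_int \<alpha>) (\<rho> X v)"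
    using rho_sbracket[OF sder_E11 X _ X] w unfolding has_weight_def by (simp add: ssign_def)
  thus "\<rho> E11 (\<rho> X v) = s (of_int (i - \<alpha>)) (\<rho> X v)"
    using rho_Euler(1)[OF v] rho_scale[OF X] by (simp add: scale_left_diff_distrib algebra_simps)
  have "\<rho> E22 (\<rho> X v) - \<rho> X (\<rho> E22 v) = - s (of_int \<beta>) (\<rho> X v)"
    using rho_sbracket[OF sder_E22 X _ X] w unfolding has_weight_def by (simp add: ssign_def)
  thus "\<rho> E22 (\<rho> X v) = s (of_int (j - \<beta>)) (\<rho> X v)"
    using rho_Euler(2)[OF v] rho_scale[OF X] by (simp add: scale_left_diff_distrib algebra_simps)
qed (use rho_Euler in auto)

lemma rho_anticommutator:
  assumes "sder True D" "sder True E" "sbracket True True D E = (\<lambda>h. gscale a (X h))" "sder r X"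
  shows "\<rho> D (\<rho> E v) + \<rho> E (\<rho> D v) = - s a (\<rho> X v)"
  using rho_sbracket[OF assms, of v] by (simp add: ssign_def)

lemma rho_commutator:
  assumes "sder False D" "sder True E" "sbracket False True D E = (\<lambda>h. gscale a (X h))" "sder r X"
  shows "\<rho> D (\<rho> E v) - \<rho> E (\<rho> D v) = - s a (\<rho> X v)"
  using rho_sbracket[OF assms, of v] by (simp add: ssign_def)

lemma rho_square_zero:
  assumes "sder True D" "sbracket True True D D = (\<lambda>h. gscale 0 (X h))" "sder r X"
  shows "\<rho> D (\<rho> D v) = 0"
proof -
  have "s 2 (\<rho> D (\<rho> D v)) = 0"
    using rho_anticommutator[OF assms(1,1,2,3), of v] by (simp add: scale_two)
  thus ?thesis by simp
qed


lemma column_contraction_columns: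
  "column_contraction s Vg N (\<rho> del1) (\<rho> del2) (\<rho> E21) (\<rho> eta12_del1) 1"
proof (unfold_locales, unfold mult_1)
  show "lin_on s UNIV (\<rho> del1)" "lin_on s UNIV (\<rho> del2)"
    "lin_on s UNIV (\<rho> E21)" "lin_on s UNIV (\<rho> eta12_del1)"
    by (rule rho_lin_on, rule sder_del1 sder_del2 sder_E21 sder_eta12_del1)+
  show "v \<in> Vg i j \<Longrightarrow> \<rho> del1 v \<in> Vg (i+1) j"
    and "v \<in> Vg i j \<Longrightarrow> \<rho> del2 v \<in> Vg i (j+1)"
    and "v \<in> Vg i j \<Longrightarrow> \<rho> E21 v \<in> Vg (i+1) (j-1)"
    and "v \<in> Vg i j \<Longrightarrow> \<rho> eta12_del1 v \<in> Vg i (j-1)" for v i j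
    using rho_bidegree[OF sder_del1 has_weight_del1, of v i j]
      rho_bidegree[OF sder_del2 has_weight_del2, of v i j]
      rho_bidegree[OF sder_E21 has_weight_E21, of v i j]
      rho_bidegree[OF sder_eta12_del1 has_weight_eta12_del1, of v i j]
    by simp_all
  show "\<rho> del1 (\<rho> del1 v) = 0" "\<rho> del2 (\<rho> del2 v) = 0" for v
    by (rule rho_square_zero[OF sder_del1 sbracket_del1_del1 sder_del1],
        rule rho_square_zero[OF sder_del2 sbracket_del2_del2 sder_del2])
  show "\<rho> del1 (\<rho> del2 v) + \<rho> del2 (\<rho> del1 v) = 0" for v
    using rho_anticommutator[OF sder_del1 sder_del2 sbracket_del1_del2 sder_del1] by simp
  show "\<rho> E21 (\<rho> del2 v) - \<rho> del2 (\<rho> E21 v) = \<rho> del1 v" for v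
    using rho_commutator[OF sder_E21 sder_del2 sbracket_E21_del2 sder_del1] by simp
  show "\<rho> E21 (\<rho> del1 v) = \<rho> del1 (\<rho> E21 v)" for v
    using rho_commutator[OF sder_E21 sder_del1 sbracket_E21_del1 sder_del1] by simp
  show "v \<in> Vg i j \<Longrightarrow> \<rho> del2 (\<rho> eta12_del1 v) + \<rho> eta12_del1 (\<rho> del2 v) = s (of_int i) v" for v i j
    using rho_anticommutator[OF sder_del2 sder_eta12_del1 sbracket_del2_eta12_del1 sder_E11] rho_Euler(1)
    by simp
qed (fact Vg_below, simp)

lemma column_contraction_rows:
  "column_contraction s (\<lambda>i j. Vg j i) N (\<rho> del2) (\<rho> del1) (\<rho> E12) (\<rho> eta12_del2) (-1)"
proof (intro column_contraction.intro bigraded_space_transpose column_contraction_axioms.intro)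
  show "lin_on s UNIV (\<rho> del1)" "lin_on s UNIV (\<rho> del2)"
    "lin_on s UNIV (\<rho> E12)" "lin_on s UNIV (\<rho> eta12_del2)"
    by (rule rho_lin_on, rule sder_del1 sder_del2 sder_E12 sder_eta12_del2)+
  show "v \<in> Vg j i \<Longrightarrow> \<rho> del2 v \<in> Vg j (i+1)"
    and "v \<in> Vg j i \<Longrightarrow> \<rho> del1 v \<in> Vg (j+1) i"
    and "v \<in> Vg j i \<Longrightarrow> \<rho> E12 v \<in> Vg (j-1) (i+1)"
    and "v \<in> Vg j i \<Longrightarrow> \<rho> eta12_del2 v \<in> Vg (j-1) i" for v i j
    using rho_bidegree[OF sder_del2 has_weight_del2, of v j i]
      rho_bidegree[OF sder_del1 has_weight_del1, of v j i]
      rho_bidegree[OF sder_E12 has_weight_E12, of v j i]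
      rho_bidegree[OF sder_eta12_del2 has_weight_eta12_del2, of v j i]
    by simp_all
  show "\<rho> del1 (\<rho> del1 v) = 0" "\<rho> del2 (\<rho> del2 v) = 0" for v
    by (rule rho_square_zero[OF sder_del1 sbracket_del1_del1 sder_del1],
        rule rho_square_zero[OF sder_del2 sbracket_del2_del2 sder_del2])
  show "\<rho> del2 (\<rho> del1 v) + \<rho> del1 (\<rho> del2 v) = 0" for v
    using rho_anticommutator[OF sder_del1 sder_del2 sbracket_del1_del2 sder_del1] by (simp add: add.commute)
  show "\<rho> E12 (\<rho> del1 v) - \<rho> del1 (\<rho> E12 v) = \<rho> del2 v" for v
    using rho_commutator[OF sder_E12 sder_del1 sbracket_E12_del1 sder_del2] by simp
  show "\<rho> E12 (\<rho> del2 v) = \<rho> del2 (\<rho> E12 v)" for v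
    using rho_commutator[OF sder_E12 sder_del2 sbracket_E12_del2 sder_del2] by simp
  show "v \<in> Vg j i \<Longrightarrow> \<rho> del1 (\<rho> eta12_del2 v) + \<rho> eta12_del2 (\<rho> del1 v) = s (- 1 * of_int i) v"
    for v i j
    using rho_anticommutator[OF sder_del1 sder_eta12_del2 sbracket_del1_eta12_del2 sder_E22] rho_Euler(2)
    by (simp add: scale_minus_left)
  show "i < N \<or> j < N \<Longrightarrow> Vg j i = {0}" for i j using Vg_below by blast
qed simp

end

theorem corollary2p3p8:
  fixes s :: "'k::field_char_0 \<Rightarrow> 'v::ab_group_add \<Rightarrow> 'v"
    and Vpar :: "bool \<Rightarrow> 'v set"
    and Vg :: "int \<Rightarrow> int \<Rightarrow> 'v set"
    and \<rho> :: "('k grass \<Rightarrow> 'k grass) \<Rightarrow> 'v \<Rightarrow> 'v"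
  assumes "N2_susy_complex s Vpar Vg \<rho>"
    and "\<exists>N. \<forall>i j. i < N \<or> j < N \<longrightarrow> Vg i j = {0}"
  shows "quasi_isomorphic s (Tot s Vg) (\<lambda>v. \<rho> del1 v + \<rho> del2 v) (row0 Vg) (\<rho> del1)
       \<and> quasi_isomorphic s (Tot s Vg) (\<lambda>v. \<rho> del1 v + \<rho> del2 v) (col0 Vg) (\<rho> del2)"
proof -
  obtain N where N: "\<forall>i j. i < N \<or> j < N \<longrightarrow> Vg i j = {0}" using assms(2) by blast
  interpret N2_bounded_complex s Vpar Vg \<rho> N
    by (rule N2_bounded_complex.intro[OF assms(1)]) (use N in blast)
  note col = column_contraction.quasi_iso_expA[OF column_contraction_columns]
  note row = column_contraction.quasi_iso_expA[OF column_contraction_rows]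
  show ?thesis
    using quasi_isomorphic_if_quasi_iso[OF col] quasi_isomorphic_if_quasi_iso[OF row]
    unfolding column_contraction.dtot_def[OF column_contraction_columns]
      column_contraction.dtot_def[OF column_contraction_rows] Tot_transpose[of s Vg] col0_transpose
    by (simp add: add.commute)
qed

end
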